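(* Let $k\in\mathbb Z$ and $c_k:=\frac14-9k^2$. Then $\partial_xv_k=c_kv_{k-1}$ in $(0,\infty)\times\mathbb R$, and for every $t\in\mathbb R$, $$c_k\Lambda_{k-1}(t)=\frac{(1+t^2)^{1/2}}{3}\Big(\big(\tfrac12+3k\big)\Lambda_k(t)-t(1+t^2)\Lambda_k'(t)\Big).$$
   Context: Let $M(a,b,\zeta)=\sum_{n\ge0}\frac{(a)_n}{(b)_n}\frac{\zeta^n}{n!}$ be Kummer's function. For $k\in\mathbb Z$ define $$\Lambda_k(t)=9^{\frac16+k}(1+t^2)^{-\frac14-\frac{3k}2}\Big[\tfrac{\Gamma(1/3)}{\Gamma(1/6-k)}M\big(-\tfrac16-k,\tfrac23,-\tfrac{t^3}{9}\big)-\tfrac{t}{9^{1/3}}\tfrac{\Gamma(-1/3)}{\Gamma(-1/6-k)}M\big(\tfrac16-k,\tfrac43,-\tfrac{t^3}{9}\big)\Big],$$ and for $x>0$, $z\in\mathbb R$, $v_k(x,z):=r^{\frac12+3k}\Lambda_k(t)$ with $r=(z^2+x^{2/3})^{1/2}$, $t=zx^{-1/3}$. *)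

theory Defs
  imports "HOL-Analysis.Analysis"
begin

definition kummerM :: "real \<Rightarrow> real \<Rightarrow> real \<Rightarrow> real" where
  "kummerM a b \<zeta> = (\<Sum>n. pochhammer a n / pochhammer b n * \<zeta> ^ n / fact n)"

definition Lam :: "int \<Rightarrow> real \<Rightarrow> real" where
  "Lam k t = 9 powr (1/6 + real_of_int k) * (1 + t^2) powr (-1/4 - 3 * real_of_int k / 2) *
     (Gamma (1/3) / Gamma (1/6 - real_of_int k) * kummerM (-1/6 - real_of_int k) (2/3) (- (t^3) / 9)
      - t / 9 powr (1/3) * (Gamma (-1/3) / Gamma (-1/6 - real_of_int k))
          * kummerM (1/6 - real_of_int k) (4/3) (- (t^3) / 9))"

definition vfun :: "int \<Rightarrow> real \<Rightarrow> real \<Rightarrow> real" where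
  "vfun k x z = (sqrt (z^2 + x powr (2/3))) powr (1/2 + 3 * real_of_int k) * Lam k (z * x powr (-1/3))"

definition ck :: "int \<Rightarrow> real" where
  "ck k = 1/4 - 9 * (real_of_int k)^2"

end

(*
  Write s = -t^3/9 and C(a,A,B)(t) = A M(a,2/3,s) - B t M(a+1/3,4/3,s); the bracket of Lambda_k is
  C(a,A,B) with a = -1/6-k.  On functions of s the Euler operator t d/dt is 3 s d/ds, so Kummer's
  contiguous relation s M'(a,b,s) = a (M(a+1,b,s) - M(a,b,s)) shows that -3a - t d/dt maps
  C(a,A,B) to C(a+1, -3aA, -(3a+1)B).  Passing from k to k-1 also replaces a by a+1, and by
  Gamma(x+1) = x Gamma(x) it divides the Gamma coefficients by a+1/3 and a; as c_k = -9a(a+1/3),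
  c_k times the bracket of Lambda_{k-1} is 3 (1/2+3k - t d/dt) applied to the bracket of Lambda_k.
  Differentiating the prefactor (1+t^2)^(-(1/2+3k)/2) turns this into the identity for Lambda_k,
  and since v_k(x,z) = (9x)^(1/6+k) times the bracket at t = z x^(-1/3), where x d/dx acts as
  -(1/3) t d/dt, into the identity for v_k.
*)

theory Submission
  imports Defs
begin

definition kummer_coeff :: "real \<Rightarrow> real \<Rightarrow> nat \<Rightarrow> real" where
  "kummer_coeff a b n = pochhammer a n / pochhammer b n / fact n"

lemma kummerM_altdef: "kummerM a b z = (\<Sum>n. kummer_coeff a b n * z ^ n)"
  by (simp add: kummerM_def kummer_coeff_def)

lemma kummer_coeff_Suc:
  assumes "b \<notin> \<int>\<^sub>\<le>\<^sub>0"
  shows "kummer_coeff a b (Suc n) = kummer_coeff a b n * ((a + n) / ((b + n) * (real n + 1)))"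
proof -
  have "pochhammer b n \<noteq> 0"
    using assms by (auto simp: pochhammer_eq_0_iff)
  moreover have "b + n \<noteq> 0"
  proof
    assume "b + n = 0"
    then have "b = - of_nat n" by (simp add: eq_neg_iff_add_eq_0)
    with assms show False by simp
  qed
  ultimately show ?thesis
    by (simp add: kummer_coeff_def pochhammer_rec' field_simps)
qed

lemma summable_kummer_series:
  assumes "b \<notin> \<int>\<^sub>\<le>\<^sub>0"
  shows "summable (\<lambda>n. kummer_coeff a b n * z ^ n)"
proof -
  have to_infinity: "LIM n sequentially. c + real n :> at_infinity" for c
    by (intro filterlim_at_top_imp_at_infinity filterlim_tendsto_add_at_top[OF tendsto_const]
        filterlim_real_sequentially)
  have "(\<lambda>n. 1 + (a - 1) / (1 + real n)) \<longlonglongrightarrow> 1 + 0"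
    by (intro tendsto_add tendsto_const tendsto_divide_0[OF tendsto_const to_infinity])
  then have "(\<lambda>n. (1 + (a - 1) / (1 + real n)) / (b + real n)) \<longlonglongrightarrow> 0"
    by (rule tendsto_divide_0[OF _ to_infinity])
  moreover have "(1 + (a - 1) / (1 + real n)) / (b + real n) = (a + n) / ((b + n) * (real n + 1))" for n
    by (simp add: field_simps)
  ultimately have "(\<lambda>n. (a + n) / ((b + n) * (real n + 1))) \<longlonglongrightarrow> 0"
    by simp
  then have "(\<lambda>n. \<bar>z * ((a + n) / ((b + n) * (real n + 1)))\<bar>) \<longlonglongrightarrow> 0"
    by (intro tendsto_rabs_zero tendsto_mult_right_zero)
  then have "eventually (\<lambda>n. \<bar>z * ((a + n) / ((b + n) * (real n + 1)))\<bar> < 1/2) sequentially"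
    by (rule order_tendstoD(2)) simp
  then obtain N where N: "\<And>n. n \<ge> N \<Longrightarrow> \<bar>z * ((a + n) / ((b + n) * (real n + 1)))\<bar> < 1/2"
    by (auto simp: eventually_sequentially)
  show ?thesis
  proof (rule summable_ratio_test[of "1/2" N])
    fix n assume "n \<ge> N"
    have "norm (kummer_coeff a b (Suc n) * z ^ Suc n)
        = norm (kummer_coeff a b n * z ^ n) * \<bar>z * ((a + n) / ((b + n) * (real n + 1)))\<bar>"
      unfolding kummer_coeff_Suc[OF assms] real_norm_def abs_mult power_Suc by (simp only: mult_ac)
    also have "\<dots> \<le> norm (kummer_coeff a b n * z ^ n) * (1/2)"
      using N[OF \<open>n \<ge> N\<close>] by (intro mult_left_mono) auto
    finally show "norm (kummer_coeff a b (Suc n) * z ^ Suc n) \<le> 1/2 * norm (kummer_coeff a b n * z ^ n)"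
      by (simp only: mult.commute)
  qed simp
qed

lemma kummerM_has_real_derivative:
  assumes "b \<notin> \<int>\<^sub>\<le>\<^sub>0"
  shows "(kummerM a b has_real_derivative (\<Sum>n. diffs (kummer_coeff a b) n * z ^ n)) (at z)"
  unfolding kummerM_altdef[abs_def]
  by (rule termdiffs_strong_converges_everywhere) (rule summable_kummer_series[OF assms])

lemma deriv_kummerM:
  "b \<notin> \<int>\<^sub>\<le>\<^sub>0 \<Longrightarrow> deriv (kummerM a b) z = (\<Sum>n. diffs (kummer_coeff a b) n * z ^ n)"
  by (rule DERIV_imp_deriv[OF kummerM_has_real_derivative])

lemma kummerM_has_real_derivative_chain [derivative_intros]:
  assumes "b \<notin> \<int>\<^sub>\<le>\<^sub>0" "(f has_real_derivative f') (at x)"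
  shows "((\<lambda>x. kummerM a b (f x)) has_real_derivative deriv (kummerM a b) (f x) * f') (at x)"
  using DERIV_chain2[OF kummerM_has_real_derivative[OF assms(1)] assms(2)]
  by (simp only: deriv_kummerM[OF assms(1)])

lemma kummer_coeff_shift: "a * kummer_coeff (a + 1) b n = (a + n) * kummer_coeff a b n"
proof -
  have "a * pochhammer (a + 1) n = (a + n) * pochhammer a n"
    by (metis pochhammer_rec pochhammer_rec')
  then show ?thesis
    by (simp add: kummer_coeff_def)
qed

lemma kummerM_contiguous:
  assumes b: "b \<notin> \<int>\<^sub>\<le>\<^sub>0"
  shows "z * deriv (kummerM a b) z = a * (kummerM (a + 1) b z - kummerM a b z)"
proof -
  define c where "c = kummer_coeff a b"
  define g where "g n = real n * c n * z ^ n" for n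
  have "(\<lambda>n. diffs c n * z ^ n) sums deriv (kummerM a b) z"
    unfolding c_def deriv_kummerM[OF b]
    by (intro summable_sums termdiff_converges_all summable_kummer_series b)
  moreover have "(\<lambda>n. g (Suc n)) = (\<lambda>n. z * (diffs c n * z ^ n))"
    by (simp add: fun_eq_iff g_def diffs_def algebra_simps)
  ultimately have "(\<lambda>n. g (Suc n)) sums (z * deriv (kummerM a b) z)"
    by (simp add: sums_mult)
  then have "g sums (z * deriv (kummerM a b) z + g 0)"
    by (simp only: sums_Suc_iff)
  then have lhs: "g sums (z * deriv (kummerM a b) z)"
    by (simp add: g_def)
  have "g = (\<lambda>n. a * (kummer_coeff (a + 1) b n * z ^ n) - a * (c n * z ^ n))"
    unfolding fun_eq_iff g_def c_def mult.assoc[symmetric] kummer_coeff_shift by (simp add: algebra_simps)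
  then have rhs: "g sums (a * kummerM (a + 1) b z - a * kummerM a b z)"
    unfolding kummerM_altdef c_def
    by (simp only:) (intro sums_diff sums_mult summable_sums summable_kummer_series b)
  from lhs rhs show ?thesis
    by (simp add: sums_unique2 right_diff_distrib)
qed

lemma minus_of_int_not_in_nonpos_Ints:
  "(c::real) \<notin> \<int> \<Longrightarrow> c - of_int k \<notin> \<int>\<^sub>\<le>\<^sub>0"
  by (intro not_in_Ints_imp_not_in_nonpos_Ints) simp

lemma Gamma_minus_of_int_pred:
  assumes "(c::real) \<notin> \<int>"
  shows "Gamma (c - of_int (k - 1)) = (c - of_int k) * Gamma (c - of_int k)"
  using Gamma_plus1[OF minus_of_int_not_in_nonpos_Ints[OF assms, of k]] by (simp add: algebra_simps)

definition kummer_comb :: "real \<Rightarrow> real \<Rightarrow> real \<Rightarrow> real \<Rightarrow> real" where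
  "kummer_comb a A B t = A * kummerM a (2/3) (- (t^3) / 9) - B * t * kummerM (a + 1/3) (4/3) (- (t^3) / 9)"

lemma kummer_comb_euler:
  "kummer_comb a A B differentiable (at t) \<and>
   - 3 * a * kummer_comb a A B t - t * deriv (kummer_comb a A B) t
     = kummer_comb (a + 1) (- 3 * a * A) (- (3 * a + 1) * B) t"
proof -
  define s where "s = - (t^3) / 9"
  define M1 where "M1 = kummerM a (2/3)"
  define M2 where "M2 = kummerM (a + 1/3) (4/3)"
  have thirds: "(2/3::real) \<notin> \<int>\<^sub>\<le>\<^sub>0" "(4/3::real) \<notin> \<int>\<^sub>\<le>\<^sub>0"
    by (simp_all add: not_in_Ints_imp_not_in_nonpos_Ints)
  have comb: "kummer_comb a A B = (\<lambda>t. A * M1 (- (t^3) / 9) - B * t * M2 (- (t^3) / 9))"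
    by (simp add: fun_eq_iff kummer_comb_def M1_def M2_def)
  have "(kummer_comb a A B has_real_derivative
         A * (deriv M1 s * (- (t^2) / 3)) - B * (M2 s + t * (deriv M2 s * (- (t^2) / 3)))) (at t)"
    unfolding comb s_def M1_def M2_def
    by (auto intro!: derivative_eq_intros simp: thirds algebra_simps power2_eq_square)
  then have diff: "kummer_comb a A B differentiable (at t)"
    and deriv_eq: "deriv (kummer_comb a A B) t
      = A * (deriv M1 s * (- (t^2) / 3)) - B * (M2 s + t * (deriv M2 s * (- (t^2) / 3)))"
    by (auto simp: real_differentiable_def DERIV_imp_deriv)
  have "t * deriv (kummer_comb a A B) t = 3 * A * (s * deriv M1 s) - B * t * (M2 s + 3 * (s * deriv M2 s))"
    unfolding deriv_eq s_def by (simp add: field_simps power2_eq_square power3_eq_cube)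
  also have "\<dots> = 3 * A * a * (kummerM (a + 1) (2/3) s - M1 s)
      - B * t * (M2 s + 3 * (a + 1/3) * (kummerM (a + 1 + 1/3) (4/3) s - M2 s))"
    unfolding M1_def M2_def by (simp add: kummerM_contiguous thirds add_ac)
  finally show ?thesis
    using diff by (simp add: kummer_comb_def M1_def M2_def s_def algebra_simps)
qed

definition Lam_bracket :: "int \<Rightarrow> real \<Rightarrow> real" where
  "Lam_bracket k = kummer_comb (-1/6 - real_of_int k) (Gamma (1/3) / Gamma (1/6 - real_of_int k))
     (Gamma (-1/3) / (9 powr (1/3) * Gamma (-1/6 - real_of_int k)))"

lemma Lam_eq_bracket:
  "Lam k t = 9 powr (1/6 + real_of_int k) * (1 + t^2) powr (-1/4 - 3 * real_of_int k / 2) * Lam_bracket k t"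
  by (simp add: Lam_def Lam_bracket_def kummer_comb_def)

lemma Lam_bracket_recurrence:
  "Lam_bracket k differentiable (at t) \<and>
   ck k * Lam_bracket (k - 1) t = 3 * ((1/2 + 3 * real_of_int k) * Lam_bracket k t - t * deriv (Lam_bracket k) t)"
proof -
  define a where "a = -1/6 - real_of_int k"
  define a' where "a' = 1/6 - real_of_int k"
  define A where "A = Gamma (1/3) / Gamma a'"
  define B where "B = Gamma (-1/3) / (9 powr (1/3) * Gamma a)"
  have bracket: "Lam_bracket k = kummer_comb a A B"
    by (simp add: Lam_bracket_def a_def a'_def A_def B_def)
  have "Gamma (1/6 - real_of_int (k - 1)) = a' * Gamma a'"
    unfolding a'_def by (rule Gamma_minus_of_int_pred) simp
  moreover have "Gamma (-1/6 - real_of_int (k - 1)) = a * Gamma a"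
    unfolding a_def by (rule Gamma_minus_of_int_pred) simp
  moreover have "-1/6 - real_of_int (k - 1) = a + 1"
    by (simp add: a_def)
  ultimately have bracket_pred: "Lam_bracket (k - 1) = kummer_comb (a + 1) (A / a') (B / a)"
    by (simp add: Lam_bracket_def A_def B_def mult_ac)
  have "a \<notin> \<int>\<^sub>\<le>\<^sub>0" "a' \<notin> \<int>\<^sub>\<le>\<^sub>0"
    unfolding a_def a'_def by (auto intro!: minus_of_int_not_in_nonpos_Ints)
  then have "a \<noteq> 0" "a' \<noteq> 0"
    by auto
  have ck: "ck k = - 9 * a * a'"
    by (simp add: ck_def a_def a'_def field_simps power2_eq_square)
  have a'_eq: "a' = a + 1/3"
    by (simp add: a_def a'_def)
  have cA: "ck k * (A / a') = 3 * (- 3 * a * A)"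
    using \<open>a' \<noteq> 0\<close> unfolding ck by simp
  have cB: "ck k * (B / a) = 3 * (- (3 * a + 1) * B)"
    using \<open>a \<noteq> 0\<close> unfolding ck a'_eq by (simp add: algebra_simps)
  have "ck k * Lam_bracket (k - 1) t = kummer_comb (a + 1) (ck k * (A / a')) (ck k * (B / a)) t"
    by (simp add: bracket_pred kummer_comb_def algebra_simps)
  also have "\<dots> = 3 * kummer_comb (a + 1) (- 3 * a * A) (- (3 * a + 1) * B) t"
    unfolding cA cB by (simp add: kummer_comb_def algebra_simps)
  also have "\<dots> = 3 * (- 3 * a * Lam_bracket k t - t * deriv (Lam_bracket k) t)"
    using kummer_comb_euler[of a A B t] by (simp add: bracket)
  finally show ?thesis
    using kummer_comb_euler[of a A B t] by (simp add: bracket a_def)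
qed

lemma Lam_bracket_has_real_derivative [derivative_intros]:
  "(f has_real_derivative f') (at x) \<Longrightarrow>
   ((\<lambda>x. Lam_bracket k (f x)) has_real_derivative deriv (Lam_bracket k) (f x) * f') (at x)"
  using Lam_bracket_recurrence DERIV_chain2 DERIV_deriv_iff_real_differentiable by blast

lemma Lam_euler_operator:
  "Lam k differentiable (at t) \<and>
   (1/2 + 3 * real_of_int k) * Lam k t - t * (1 + t^2) * deriv (Lam k) t
     = 9 powr (1/6 + real_of_int k) * (1 + t^2) powr (3/4 - 3 * real_of_int k / 2)
       * ((1/2 + 3 * real_of_int k) * Lam_bracket k t - t * deriv (Lam_bracket k) t)"
proof -
  define e where "e = 1/2 + 3 * real_of_int k"
  define C where "C = (9::real) powr (1/6 + real_of_int k)"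
  define u where "u = 1 + t^2"
  define P where "P = u powr (- e / 2)"
  define F where "F = Lam_bracket k t"
  define F' where "F' = deriv (Lam_bracket k) t"
  have u: "u > 0"
    by (simp add: u_def add_pos_nonneg)
  have "-1/4 - 3 * real_of_int k / 2 = - e / 2"
    by (simp add: e_def)
  then have Lam_k: "Lam k = (\<lambda>t. C * (1 + t^2) powr (- e / 2) * Lam_bracket k t)"
    by (intro ext) (simp only: Lam_eq_bracket C_def)
  have "(Lam k has_real_derivative C * (- e / 2 * u powr (- e / 2 - 1) * (2 * t) * F + P * F')) (at t)"
    unfolding Lam_k u_def P_def F_def F'_def
    by (auto intro!: derivative_eq_intros simp: add_pos_nonneg algebra_simps)
  moreover have "u powr (- e / 2 - 1) = P / u"
    using u by (simp add: P_def powr_diff)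
  ultimately have has_deriv: "(Lam k has_real_derivative C * P * (F' - e * t * F / u)) (at t)"
    by (simp add: algebra_simps)
  have "t * u * (F' - e * t * F / u) = t * u * F' - e * t^2 * F"
    using u by (simp add: right_diff_distrib power2_eq_square)
  then have key: "e * F - t * u * (F' - e * t * F / u) = u * (e * F - t * F')"
    by (simp add: u_def algebra_simps)
  have "3/4 - 3 * real_of_int k / 2 = - e / 2 + 1"
    by (simp add: e_def field_simps)
  then have Pu: "P * u = u powr (3/4 - 3 * real_of_int k / 2)"
    using u by (simp only: P_def powr_add) simp
  have "Lam k t = C * P * F"
    by (simp add: Lam_k P_def F_def u_def)
  then have "e * Lam k t - t * u * deriv (Lam k) t = C * P * (e * F - t * u * (F' - e * t * F / u))"
    unfolding DERIV_imp_deriv[OF has_deriv] by (simp add: algebra_simps)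
  also have "\<dots> = C * u powr (3/4 - 3 * real_of_int k / 2) * (e * F - t * F')"
    unfolding key Pu [symmetric] by (simp only: mult_ac)
  finally show ?thesis
    using has_deriv real_differentiable_def unfolding C_def u_def e_def F_def F'_def by blast
qed

lemma Lam_pred_eq_bracket:
  "Lam (k - 1) t = 9 powr (1/6 + real_of_int k) / 9 * (1 + t^2) powr (3/4 - 3 * real_of_int k / 2)
     * sqrt (1 + t^2) * Lam_bracket (k - 1) t"
proof -
  have "1/6 + real_of_int (k - 1) = (1/6 + real_of_int k) - 1"
    and "-1/4 - 3 * real_of_int (k - 1) / 2 = (3/4 - 3 * real_of_int k / 2) + 1/2"
    by (simp_all add: field_simps)
  moreover have "1 + t^2 > 0"
    by (simp add: add_pos_nonneg)
  ultimately show ?thesis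
    by (simp only: Lam_eq_bracket powr_diff powr_add) (simp add: powr_half_sqrt)
qed

lemma Lam_recurrence:
  "Lam k differentiable (at t) \<and>
   ck k * Lam (k - 1) t = sqrt (1 + t^2) / 3 *
     ((1/2 + 3 * real_of_int k) * Lam k t - t * (1 + t^2) * deriv (Lam k) t)"
  using Lam_euler_operator[of k t] Lam_bracket_recurrence[of k t]
  by (simp add: Lam_pred_eq_bracket)

lemma vfun_eq_bracket:
  assumes x: "x > 0"
  shows "vfun k x z = (9 * x) powr (1/6 + real_of_int k) * Lam_bracket k (z * x powr (-1/3))"
proof -
  define e where "e = 1/2 + 3 * real_of_int k"
  define t where "t = z * x powr (-1/3)"
  define u where "u = 1 + t^2"
  have u: "u > 0"
    by (simp add: u_def add_pos_nonneg)
  have "z^2 + x powr (2/3) = x powr (2/3) * u"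
  proof -
    have "x powr (2/3) * (x powr (-1/3))^2 = 1"
      using x by (simp add: power2_eq_square flip: powr_add)
    then show ?thesis
      by (simp add: u_def t_def power_mult_distrib algebra_simps)
  qed
  then have "sqrt (z^2 + x powr (2/3)) powr e = (x powr (2/3) * u) powr (e / 2)"
    using x u by (simp add: powr_half_sqrt [symmetric] powr_powr)
  also have "\<dots> = x powr (2/3 * (e / 2)) * u powr (e / 2)"
    using x u by (simp add: powr_mult powr_powr)
  also have "2/3 * (e / 2) = 1/6 + real_of_int k"
    by (simp add: e_def)
  finally have r: "sqrt (z^2 + x powr (2/3)) powr e = x powr (1/6 + real_of_int k) * u powr (e / 2)" .
  have "-1/4 - 3 * real_of_int k / 2 = - e / 2"
    by (simp add: e_def)
  then have "vfun k x z = sqrt (z^2 + x powr (2/3)) powr e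
      * (9 powr (1/6 + real_of_int k) * u powr (- e / 2) * Lam_bracket k t)"
    by (simp only: vfun_def Lam_eq_bracket flip: e_def t_def u_def)
  also have "\<dots> = (x powr (1/6 + real_of_int k) * 9 powr (1/6 + real_of_int k))
      * (u powr (e / 2) * u powr (- e / 2)) * Lam_bracket k t"
    unfolding r by (simp only: mult_ac)
  also have "\<dots> = (9 * x) powr (1/6 + real_of_int k) * Lam_bracket k t"
    using x u by (simp add: powr_mult flip: powr_add)
  finally show ?thesis
    by (simp only: t_def)
qed

lemma vfun_has_real_derivative:
  assumes x: "x > 0"
  shows "((\<lambda>y. vfun k y z) has_real_derivative ck k * vfun (k - 1) x z) (at x)"
proof -
  define q where "q = 1/6 + real_of_int k"
  define t where "t = z * x powr (-1/3)"
  define W where "W = (9 * x) powr (q - 1)"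
  define D where "D = q * (9 * x) powr (q - 1) * 9 * Lam_bracket k t
      + (9 * x) powr q * (deriv (Lam_bracket k) t * (z * (-1/3 * x powr (-1/3 - 1))))"
  have has_deriv: "((\<lambda>y. (9 * y) powr q * Lam_bracket k (z * y powr (-1/3))) has_real_derivative D) (at x)"
    unfolding D_def t_def using x by (auto intro!: derivative_eq_intros simp: algebra_simps)
  have W: "(9 * x) powr q = W * (9 * x)"
    using x by (simp add: W_def powr_diff)
  have "x powr (-1/3 - 1) = x powr (-1/3) / x"
    using x by (simp only: powr_diff) simp
  then have "D = W * (3 * ((1/2 + 3 * real_of_int k) * Lam_bracket k t - t * deriv (Lam_bracket k) t))"
    using x unfolding D_def W_def[symmetric] W by (simp add: t_def q_def field_simps)
  also have "\<dots> = W * (ck k * Lam_bracket (k - 1) t)"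
    using Lam_bracket_recurrence[of k t] by simp
  also have "\<dots> = ck k * vfun (k - 1) x z"
  proof -
    have "1/6 + real_of_int (k - 1) = q - 1"
      by (simp add: q_def)
    then show ?thesis
      unfolding vfun_eq_bracket[OF x] W_def t_def by simp
  qed
  finally have D_eq: "D = ck k * vfun (k - 1) x z" .
  show ?thesis
    using has_deriv[unfolded D_eq]
    by (rule has_field_derivative_transform_within_open[where S = "{0<..}"])
       (use x in \<open>simp_all add: vfun_eq_bracket q_def\<close>)
qed


theorem lemma2p14:
  fixes k :: int
  shows "(\<forall>x z. x > 0 \<longrightarrow>
            ((\<lambda>y. vfun k y z) has_real_derivative (ck k * vfun (k - 1) x z)) (at x))
       \<and> (\<forall>t. Lam k differentiable (at t) \<and>
            ck k * Lam (k - 1) t = sqrt (1 + t^2) / 3 *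
              ((1/2 + 3 * real_of_int k) * Lam k t - t * (1 + t^2) * deriv (Lam k) t))"
  using vfun_has_real_derivative Lam_recurrence by blast

end
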